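(* Let $\mathcal{L}\subseteq\mathbb{S}^n$ be a regular linear subspace. Every point of $\mathcal{L}^{-1}\cap\mathcal{L}^\perp$ is a non-invertible matrix.
   Context: $\mathbb{S}^n$ denotes the space of complex symmetric $n\times n$ matrices. A linear subspace $\mathcal{L}$ is regular if it contains a full-rank matrix. $\mathcal{L}^\perp=\{\Sigma:\mathrm{tr}(K\Sigma)=0\ \forall K\in\mathcal{L}\}$. The reciprocal variety $\mathcal{L}^{-1}$ is the Zariski closure of the set of inverses of invertible matrices in $\mathcal{L}$. *)

theory Defs
  imports "HOL-Analysis.Analysis"
begin

type_synonym 'n cmat = "complex^'n^'n"

definition sym_mats :: "'n::finite cmat set" where
  "sym_mats = {A. transpose A = A}"

definition cscale :: "complex \<Rightarrow> 'n::finite cmat \<Rightarrow> 'n cmat" where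
  "cscale c A = (\<chi> i j. c * A$i$j)"

definition sym_subspace :: "'n::finite cmat set \<Rightarrow> bool" where
  "sym_subspace L \<longleftrightarrow> L \<subseteq> sym_mats \<and> 0 \<in> L \<and>
     (\<forall>A\<in>L. \<forall>B\<in>L. A + B \<in> L) \<and> (\<forall>c. \<forall>A\<in>L. cscale c A \<in> L)"

definition regular_subspace :: "'n::finite cmat set \<Rightarrow> bool" where
  "regular_subspace L \<longleftrightarrow> (\<exists>K\<in>L. invertible K)"

definition perp_space :: "'n::finite cmat set \<Rightarrow> 'n cmat set" where
  "perp_space L = {S \<in> sym_mats. \<forall>K\<in>L. trace (K ** S) = 0}"

inductive_set poly_fun :: "('n::finite cmat \<Rightarrow> complex) set" where
  const: "(\<lambda>A. c) \<in> poly_fun"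
| entry: "(\<lambda>A. A$i$j) \<in> poly_fun"
| add: "p \<in> poly_fun \<Longrightarrow> q \<in> poly_fun \<Longrightarrow> (\<lambda>A. p A + q A) \<in> poly_fun"
| mult: "p \<in> poly_fun \<Longrightarrow> q \<in> poly_fun \<Longrightarrow> (\<lambda>A. p A * q A) \<in> poly_fun"

definition zariski_closure :: "'n::finite cmat set \<Rightarrow> 'n cmat set" where
  "zariski_closure S = {X. \<forall>p\<in>poly_fun. (\<forall>Y\<in>S. p Y = 0) \<longrightarrow> p X = 0}"

definition reciprocal_variety :: "'n::finite cmat set \<Rightarrow> 'n cmat set" where
  "reciprocal_variety L = zariski_closure (matrix_inv ` {K \<in> L. invertible K})"

end

theory Submission
  imports Defs
begin

(*
  If S were invertible, the polynomial function X |-> tr(adj(X) S) would separate S from the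
  reciprocal variety: at the inverse of an invertible K in L it equals det(K^-1) tr(K S) = 0
  because S is orthogonal to L, so it vanishes on the Zariski closure; but at S it equals
  n det S <> 0.
*)

lemma matrix_inv_right:
  fixes A :: "'a::semiring_1^'n^'m"
  assumes "invertible A"
  shows "A ** matrix_inv A = mat 1"
  using someI_ex[OF assms[unfolded invertible_def]] unfolding matrix_inv_def by auto

lemma matrix_inv_left:
  fixes A :: "'a::semiring_1^'n^'m"
  assumes "invertible A"
  shows "matrix_inv A ** A = mat 1"
  using someI_ex[OF assms[unfolded invertible_def]] unfolding matrix_inv_def by auto

lemma invertible_matrix_inv:
  fixes A :: "'a::semiring_1^'n^'m"
  assumes "invertible A"
  shows "invertible (matrix_inv A)"
  using matrix_inv_left[OF assms] matrix_inv_right[OF assms] unfolding invertible_def by blast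

lemma matrix_inv_matrix_inv:
  fixes A :: "'a::semiring_1^'n^'m"
  assumes "invertible A"
  shows "matrix_inv (matrix_inv A) = A"
proof -
  have "matrix_inv (matrix_inv A) = (A ** matrix_inv A) ** matrix_inv (matrix_inv A)"
    using matrix_inv_right[OF assms] by simp
  also have "\<dots> = A ** (matrix_inv A ** matrix_inv (matrix_inv A))"
    by (simp add: matrix_mul_assoc)
  also have "\<dots> = A"
    using matrix_inv_right[OF invertible_matrix_inv[OF assms]] by simp
  finally show ?thesis .
qed

text \<open>Expanding along column k, entry (k, i) is the (i, k) cofactor of X.\<close>
definition adjugate :: "'a::comm_ring_1^'n^'n \<Rightarrow> 'a^'n^'n" where
  "adjugate X = (\<chi> k i. det (\<chi> a b. if b = k then (if a = i then 1 else 0) else X $ a $ b))"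

lemma adjugate_eq_det_mult_matrix_inv:
  fixes X :: "'a::field^'n^'n"
  assumes "invertible X"
  shows "adjugate X $ k $ i = det X * matrix_inv X $ k $ i"
proof -
  let ?x = "matrix_inv X *v axis i 1"
  have "X *v ?x = axis i 1"
    using matrix_inv_right[OF assms] by (simp add: matrix_vector_mul_assoc)
  then have "(\<chi> a b. if b = k then (X *v ?x) $ a else X $ a $ b)
      = (\<chi> a b. if b = k then (if a = i then 1 else 0) else X $ a $ b)"
    by (simp add: vec_eq_iff axis_def)
  moreover have "?x $ k = matrix_inv X $ k $ i"
    by (simp add: matrix_vector_mult_def axis_def if_distrib cong: if_cong)
  ultimately show ?thesis
    using cramer_lemma[of k X ?x] unfolding adjugate_def by (simp add: mult.commute)
qed

lemma trace_adjugate_mult: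
  fixes X :: "'a::field^'n^'n"
  assumes "invertible X"
  shows "trace (adjugate X ** S) = det X * trace (matrix_inv X ** S)"
  unfolding trace_def matrix_matrix_mult_def adjugate_eq_det_mult_matrix_inv[OF assms]
  by (simp add: sum_distrib_left mult.assoc)

lemma poly_fun_sum:
  assumes "finite I" "\<And>i. i \<in> I \<Longrightarrow> f i \<in> poly_fun"
  shows "(\<lambda>A. \<Sum>i\<in>I. f i A) \<in> poly_fun"
  using assms
proof (induction I rule: finite_induct)
  case empty
  then show ?case using poly_fun.const[of 0] by simp
next
  case (insert x F)
  have "(\<lambda>A. f x A + (\<Sum>i\<in>F. f i A)) \<in> poly_fun"
    using insert by (intro poly_fun.add) auto
  then show ?case using insert by simp
qed

lemma poly_fun_prod:
  assumes "finite I" "\<And>i. i \<in> I \<Longrightarrow> f i \<in> poly_fun"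
  shows "(\<lambda>A. \<Prod>i\<in>I. f i A) \<in> poly_fun"
  using assms
proof (induction I rule: finite_induct)
  case empty
  then show ?case using poly_fun.const[of 1] by simp
next
  case (insert x F)
  have "(\<lambda>A. f x A * (\<Prod>i\<in>F. f i A)) \<in> poly_fun"
    using insert by (intro poly_fun.mult) auto
  then show ?case using insert by simp
qed

lemma poly_fun_det:
  fixes M :: "'n::finite cmat \<Rightarrow> 'm::finite cmat"
  assumes "\<And>a b. (\<lambda>X. M X $ a $ b) \<in> poly_fun"
  shows "(\<lambda>X. det (M X)) \<in> poly_fun"
  unfolding det_def
  by (intro poly_fun_sum poly_fun.mult poly_fun.const poly_fun_prod assms)
     (auto simp: finite_permutations)

lemma poly_fun_adjugate_entry: "(\<lambda>X. adjugate X $ k $ i) \<in> poly_fun"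
  unfolding adjugate_def vec_lambda_beta
proof (rule poly_fun_det)
  fix a b
  show "(\<lambda>X. (\<chi> a b. if b = k then if a = i then 1 else 0 else X $ a $ b) $ a $ b) \<in> poly_fun"
    by (cases "b = k") (auto intro: poly_fun.const poly_fun.entry)
qed

lemma poly_fun_trace_adjugate_mult: "(\<lambda>X. trace (adjugate X ** S)) \<in> poly_fun"
  unfolding trace_def matrix_matrix_mult_def vec_lambda_beta
  by (intro poly_fun_sum poly_fun.mult poly_fun_adjugate_entry poly_fun.const) auto

lemma zariski_closure_vanishing:
  assumes "X \<in> zariski_closure A" "p \<in> poly_fun" "\<And>Y. Y \<in> A \<Longrightarrow> p Y = 0"
  shows "p X = 0"
  using assms unfolding zariski_closure_def by blast

lemma reciprocal_variety_not_invertible: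
  fixes L :: "'n::finite cmat set"
  assumes "S \<in> reciprocal_variety L" and perp: "\<And>K. K \<in> L \<Longrightarrow> trace (K ** S) = 0"
  shows "\<not> invertible S"
proof
  assume "invertible S"
  let ?p = "\<lambda>X. trace (adjugate X ** S)"
  have vanishes: "?p (matrix_inv K) = 0" if "K \<in> L" "invertible K" for K
    using trace_adjugate_mult[OF invertible_matrix_inv[OF \<open>invertible K\<close>]]
    by (simp add: matrix_inv_matrix_inv \<open>invertible K\<close> perp \<open>K \<in> L\<close>)
  have "?p S = 0"
    using assms(1) unfolding reciprocal_variety_def
    by (rule zariski_closure_vanishing[OF _ poly_fun_trace_adjugate_mult]) (auto intro: vanishes)
  moreover have "?p S = det S * of_nat CARD('n)"
    using trace_adjugate_mult[OF \<open>invertible S\<close>] by (simp add: matrix_inv_left \<open>invertible S\<close> trace_I)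
  moreover have "det S \<noteq> 0"
    using \<open>invertible S\<close> invertible_det_nz by blast
  ultimately show False by simp
qed

theorem lemma2p6:
  fixes L :: "'n::finite cmat set"
  assumes "sym_subspace L" and "regular_subspace L"
      and "S \<in> reciprocal_variety L \<inter> perp_space L"
  shows "\<not> invertible S"
  using assms(3) reciprocal_variety_not_invertible[of S L] unfolding perp_space_def by blast

end
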